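(* Let $(b_n)_{n\ge1}$ be a sequence of nonnegative real numbers and $f:\mathbb Z_{>0}\to\mathbb R_{\ge0}$ an increasing function with $\sum_{\alpha\ge1} f(2^\alpha)/2^\alpha<+\infty$. Suppose there is an integer $n_0>0$ such that $b_{n+m}\le b_n+b_m+f(n)+f(m)$ for all integers $m,n\ge n_0$. Then $(b_n/n)_{n\ge1}$ converges to a limit in $\mathbb R_{\ge0}$. *)

theory Defs
  imports "HOL-Analysis.Analysis"
begin

end

theory Submission
  imports Defs "HOL-Analysis.Analysis"
begin

(* Idea: absorb the error into a correction term.  With the weight w(j) = f(j)/j^2
   and P(n) = 8 * (sum of w(j) for j <= n), the sequence B(n) = b(n) - n P(n) is
   genuinely subadditive on balanced pairs (n0 <= m <= n <= 2m), because the
   increment of P over (n, n+m] pays for f(n) + f(m).  The dyadic condition on f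
   makes w summable, so P is bounded and its tail T(n) tends to 0. *)

section \<open>The weight f(j)/j^2 and the correction term\<close>

locale nonneg_increasing =
  fixes f :: "nat \<Rightarrow> real"
  assumes f_nonneg: "\<And>n. n \<ge> 1 \<Longrightarrow> f n \<ge> 0"
    and f_mono: "\<And>m n. 1 \<le> m \<Longrightarrow> m \<le> n \<Longrightarrow> f m \<le> f n"
begin

definition weight :: "nat \<Rightarrow> real" where
  "weight j = f j / (real j)^2"

lemma weight_nonneg: "weight j \<ge> 0"
  using f_nonneg[of j] by (cases "j = 0") (auto simp: weight_def)

text \<open>On a dyadic block the weights are at most f(2^(K+1)) / (2^K)^2 each,
  so the block contributes at most twice the K-th term of the condensed series.\<close>

lemma dyadic_block_weight:
  "(\<Sum>j\<in>{2^K..<2^Suc K}. weight j) \<le> 2 * (f (2^(K+1)) / 2^(K+1))"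
proof -
  have "(\<Sum>j\<in>{2^K..<2^Suc K}. weight j) \<le> (\<Sum>j\<in>{(2::nat)^K..<2^Suc K}. f (2^(K+1)) / (2^K)^2)"
  proof (rule sum_mono)
    fix j assume j: "j \<in> {2^K..<(2::nat)^Suc K}"
    have j1: "1 \<le> j" using j by (metis atLeastLessThan_iff le_trans one_le_power one_le_numeral)
    have "f j \<le> f (2^(K+1))" using j j1 by (intro f_mono) auto
    moreover have "(2::real)^K \<le> real j" using j
      by (metis atLeastLessThan_iff of_nat_le_iff of_nat_numeral of_nat_power)
    hence "((2::real)^K)^2 \<le> (real j)^2" by (intro power_mono) auto
    ultimately show "weight j \<le> f (2^(K+1)) / (2^K)^2"
      unfolding weight_def using f_nonneg[of j] j1 by (intro frac_le) auto
  qed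
  also have "\<dots> = 2 * (f (2^(K+1)) / 2^(K+1))"
    by (simp add: power2_eq_square field_simps)
  finally show ?thesis .
qed

text \<open>A Cauchy-condensation style comparison: the dyadic condition on f makes the
  weights summable (condensation itself does not apply, the weights need not decrease).\<close>

lemma summable_weight:
  assumes condensed: "summable (\<lambda>\<alpha>::nat. f (2 ^ (\<alpha> + 1)) / 2 ^ (\<alpha> + 1))"
  shows "summable weight"
proof -
  define g where "g \<alpha> = f (2 ^ (\<alpha> + 1)) / 2 ^ (\<alpha> + 1)" for \<alpha> :: nat
  have g_nonneg: "g \<alpha> \<ge> 0" for \<alpha>
    using f_nonneg[of "2^(\<alpha>+1)"] by (auto simp: g_def)
  have dyadic_partial: "(\<Sum>j<2^K. weight j) \<le> 2 * (\<Sum>\<alpha><K. g \<alpha>)" for K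
  proof (induction K)
    case 0
    then show ?case by (simp add: weight_def)
  next
    case (Suc K)
    have "(\<Sum>j<2^Suc K. weight j) = (\<Sum>j<2^K. weight j) + (\<Sum>j\<in>{2^K..<2^Suc K}. weight j)"
      by (simp add: lessThan_atLeast0 sum.atLeastLessThan_concat)
    then show ?case using Suc dyadic_block_weight[of K] by (simp add: g_def)
  qed
  show ?thesis
  proof (rule summableI_nonneg_bounded[where x = "2 * suminf g"])
    fix n
    have "(\<Sum>j<n. weight j) \<le> (\<Sum>j<2^n. weight j)"
      by (rule sum_mono2) (auto simp: weight_nonneg less_exp order.strict_trans)
    also have "\<dots> \<le> 2 * (\<Sum>\<alpha><n. g \<alpha>)" by (rule dyadic_partial)
    also have "\<dots> \<le> 2 * suminf g"
      using sum_le_suminf[of g "{..<n}"] condensed g_nonneg unfolding g_def by auto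
    finally show "(\<Sum>j<n. weight j) \<le> 2 * suminf g" .
  qed (rule weight_nonneg)
qed

definition correction :: "nat \<Rightarrow> real" where
  "correction n = 8 * (\<Sum>j\<le>n. weight j)"

lemma correction_mono: "m \<le> n \<Longrightarrow> correction m \<le> correction n"
  unfolding correction_def using weight_nonneg by (auto intro!: sum_mono2)

text \<open>Each of the m new weights in (n, n+m] is at least f(n)/(n+m)^2.\<close>

lemma correction_increment:
  assumes "1 \<le> m" "m \<le> n"
  shows "8 * real m * f n / (real (n+m))^2 \<le> correction (n+m) - correction n"
proof -
  have "(\<Sum>j\<le>n+m. weight j) = (\<Sum>j\<le>n. weight j) + (\<Sum>j\<in>{n<..n+m}. weight j)"
    by (metis finite_atMost finite_greaterThanAtMost ivl_disj_int_one(3)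
        ivl_disj_un_one(3) le_add1 sum.union_disjoint)
  hence "correction (n+m) - correction n = 8 * (\<Sum>j\<in>{n<..n+m}. weight j)"
    unfolding correction_def by simp
  moreover have "(\<Sum>j\<in>{n<..n+m}. f n / (real (n+m))^2) \<le> (\<Sum>j\<in>{n<..n+m}. weight j)"
  proof (rule sum_mono)
    fix j assume j: "j \<in> {n<..n+m}"
    have "f n \<le> f j" using j assms by (intro f_mono) auto
    moreover have "(real j)^2 \<le> (real (n+m))^2" using j by (intro power_mono) auto
    moreover have "0 < (real j)^2" using j by auto
    ultimately show "f n / (real (n+m))^2 \<le> weight j"
      unfolding weight_def using f_nonneg[of n] assms by (intro frac_le) auto
  qed
  ultimately show ?thesis by simp
qed

lemma correction_absorbs_error:
  assumes "1 \<le> m" "m \<le> n" "n \<le> 2*m"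
  shows "real n * correction n + real m * correction m + f n + f m
           \<le> real (n+m) * correction (n+m)"
proof -
  have fm: "f m \<le> f n" "0 \<le> f n" using assms f_mono f_nonneg[of n] by auto
  have pos: "(0::real) < real (n+m)" using assms by simp
  have "2 * f n \<le> 8 * real m * f n / real (n+m)"
    using mult_right_mono[of "2 * real (n+m)" "8 * real m" "f n"] assms fm pos
    by (simp add: pos_le_divide_eq algebra_simps)
  also have "\<dots> = real (n+m) * (8 * real m * f n / (real (n+m))^2)"
    using pos by (simp add: power2_eq_square)
  also have "\<dots> \<le> real (n+m) * (correction (n+m) - correction n)"
    using correction_increment[OF assms(1,2)] pos by (intro mult_left_mono) auto
  finally have "2 * f n \<le> real (n+m) * (correction (n+m) - correction n)" .
  moreover have "real m * correction m \<le> real m * correction n"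
    using correction_mono[OF assms(2)] by (intro mult_left_mono) auto
  ultimately show ?thesis using fm by (simp add: algebra_simps)
qed

lemma error_le_increment:
  assumes "1 \<le> n"
  shows "2 * f n / real n \<le> correction (n+n) - correction n"
proof -
  have "8 * real n * f n / (real (n+n))^2 = 2 * f n / real n"
    using assms by (simp add: power2_eq_square field_simps)
  thus ?thesis using correction_increment[of n n] assms by simp
qed

end

text \<open>Subadditivity on balanced pairs already gives the Fekete inequality B(qN) <= q B(N):
  split q into its two halves and induct.\<close>

lemma balanced_subadditive_multiple:
  fixes B :: "nat \<Rightarrow> real"
  assumes sub: "\<And>m n. n0 \<le> m \<Longrightarrow> m \<le> n \<Longrightarrow> n \<le> 2*m \<Longrightarrow> B (n+m) \<le> B n + B m"
    and N: "n0 \<le> N"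
  shows "1 \<le> q \<Longrightarrow> B (q*N) \<le> real q * B N"
proof (induction q rule: less_induct)
  case (less q)
  show ?case
  proof (cases "q = 1")
    case True
    then show ?thesis by simp
  next
    case False
    define m where "m = q div 2"
    define n where "n = q - m"
    have q: "q = n + m" "1 \<le> m" "m \<le> n" "n \<le> 2*m" "n < q" "m < q" "1 \<le> n"
      using False less.prems unfolding n_def m_def by auto
    have balanced: "n0 \<le> m*N" "m*N \<le> n*N" "n*N \<le> 2*(m*N)"
      using q N by (auto intro: order_trans[OF _ mult_le_mono1[of 1]])
    have "B (q*N) = B (n*N + m*N)" using q by (simp add: algebra_simps)
    also have "\<dots> \<le> B (n*N) + B (m*N)" using sub[OF balanced] .
    also have "\<dots> \<le> real n * B N + real m * B N" using less.IH q by (intro add_mono) auto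
    also have "\<dots> = real q * B N" using q by (simp add: algebra_simps)
    finally show ?thesis .
  qed
qed

lemma tendsto_Inf_of_approximate_bounds:
  fixes a c e M :: "nat \<Rightarrow> real" and n0 :: nat
  assumes bdd: "bdd_below (c ` {n0..})"
    and e_lim: "e \<longlonglongrightarrow> 0"
    and lower: "\<And>n. n0 \<le> n \<Longrightarrow> c n - e n \<le> a n"
    and upper: "\<And>N n. n0 \<le> N \<Longrightarrow> n0 + N \<le> n \<Longrightarrow> a n \<le> c N + M N / real n + e n"
  shows "a \<longlonglongrightarrow> Inf (c ` {n0..})"
proof -
  define L where "L = Inf (c ` {n0..})"
  have L_le: "L \<le> c n" if "n0 \<le> n" for n
    unfolding L_def using bdd that by (intro cInf_lower) auto
  have "\<forall>\<^sub>F n in sequentially. dist (a n) L < \<epsilon>" if \<epsilon>: "\<epsilon> > 0" for \<epsilon>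
  proof -
    obtain N where N: "n0 \<le> N" "c N < L + \<epsilon>/3"
      using cInf_lessD[of "c ` {n0..}" "L + \<epsilon>/3"] \<epsilon> unfolding L_def by auto
    have "\<forall>\<^sub>F n in sequentially. dist (e n) 0 < \<epsilon>/3"
      using tendsto_iff[THEN iffD1, OF e_lim, rule_format, of "\<epsilon>/3"] \<epsilon> by simp
    moreover have "\<forall>\<^sub>F n in sequentially. M N / real n < \<epsilon>/3"
      using lim_const_over_n[of "M N"] \<epsilon> by (intro order_tendstoD(2)) auto
    moreover have "\<forall>\<^sub>F n in sequentially. n0 + N \<le> n"
      by (rule eventually_ge_at_top)
    ultimately show ?thesis
    proof eventually_elim
      case (elim n)
      have e_small: "-(\<epsilon>/3) < e n" "e n < \<epsilon>/3"
        using elim(1) by (auto simp: dist_real_def abs_less_iff)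
      have "a n < L + \<epsilon>" using upper[OF N(1) elim(3)] N(2) elim(2) e_small by linarith
      moreover have "L - \<epsilon> < a n" using lower[of n] L_le[of n] elim(3) e_small by auto
      ultimately show "dist (a n) L < \<epsilon>" by (simp add: dist_real_def abs_less_iff)
    qed
  qed
  then show ?thesis unfolding L_def by (simp add: tendsto_iff)
qed

section \<open>Almost subadditive sequences\<close>

locale almost_subadditive = nonneg_increasing f
  for f :: "nat \<Rightarrow> real" +
  fixes b :: "nat \<Rightarrow> real" and n0 :: nat
  assumes b_nonneg: "\<And>n. n \<ge> 1 \<Longrightarrow> b n \<ge> 0"
    and f_condensed: "summable (\<lambda>\<alpha>::nat. f (2 ^ (\<alpha> + 1)) / 2 ^ (\<alpha> + 1))"
    and n0_pos: "n0 > 0"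
    and subadd: "\<And>m n. n \<ge> n0 \<Longrightarrow> m \<ge> n0 \<Longrightarrow> b (n + m) \<le> b n + b m + f n + f m"
begin

definition tail :: "nat \<Rightarrow> real" where
  "tail n = 8 * suminf weight - correction n"

lemma correction_le_total: "correction n \<le> 8 * suminf weight"
  using sum_le_suminf[OF summable_weight[OF f_condensed], of "{..n}"] weight_nonneg
  unfolding correction_def by auto

lemma tail_nonneg: "tail n \<ge> 0"
  using correction_le_total[of n] unfolding tail_def by simp

lemma tail_tendsto_0: "tail \<longlonglongrightarrow> 0"
proof -
  have "(\<lambda>n. 8 * suminf weight - 8 * (\<Sum>j\<le>n. weight j)) \<longlonglongrightarrow> 8 * suminf weight - 8 * suminf weight"
    by (intro tendsto_intros summable_LIMSEQ'[OF summable_weight[OF f_condensed]])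
  thus ?thesis unfolding tail_def correction_def by simp
qed

lemma error_le_tail: "1 \<le> n \<Longrightarrow> 2 * f n / real n \<le> tail n"
  using error_le_increment[of n] correction_le_total[of "n+n"] unfolding tail_def by simp

lemma corrected_balanced_subadditive:
  assumes "n0 \<le> m" "m \<le> n" "n \<le> 2*m"
  shows "b (n+m) - real (n+m) * correction (n+m)
           \<le> (b n - real n * correction n) + (b m - real m * correction m)"
  using subadd[of n m] correction_absorbs_error[of m n] assms n0_pos by auto

lemma multiple_bound:
  assumes "n0 \<le> N" "1 \<le> q"
  shows "b (q*N) \<le> real (q*N) * (b N / real N + tail N)"
proof -
  have N_pos: "real N > 0" using assms n0_pos by simp
  have "b (q*N) - real (q*N) * correction (q*N) \<le> real q * (b N - real N * correction N)"
    using balanced_subadditive_multiple[OF corrected_balanced_subadditive assms(1)] assms(2)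
    by blast
  moreover have "real (q*N) * (b N / real N - correction N + correction (q*N))
      = real q * (b N - real N * correction N) + real (q*N) * correction (q*N)"
    using N_pos by (simp add: field_simps)
  ultimately have "b (q*N) \<le> real (q*N) * (b N / real N - correction N + correction (q*N))"
    by linarith
  also have "\<dots> \<le> real (q*N) * (b N / real N + tail N)"
    using correction_le_total[of "q*N"] unfolding tail_def by (intro mult_left_mono) auto
  finally show ?thesis .
qed

text \<open>Writing n = qN + r with n0 <= r < n0 + N gives the upper bound needed for the
  approximate Fekete lemma, with M(N) bounding the finitely many remainders b(r).\<close>

lemma upper_bound:
  assumes N: "n0 \<le> N" and n: "n0 + N \<le> n"
  shows "b n / real n \<le> (b N / real N + tail N) + (\<Sum>r\<in>{n0..<n0+N}. b r) / real n + tail n"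
proof -
  define q where "q = (n - n0) div N"
  define r where "r = n0 + (n - n0) mod N"
  define c where "c = b N / real N + tail N"
  have N1: "N \<ge> 1" using N n0_pos by auto
  have n_split: "n = q*N + r" unfolding q_def r_def using n by simp
  have q1: "1 \<le> q" unfolding q_def using n N1
    by (metis add_le_imp_le_diff add.commute div_le_mono div_self not_one_le_zero
        le_numeral_extra(4) nat_less_le)
  have r: "n0 \<le> r" "r < n0 + N" unfolding r_def using N1 by auto
  have qN: "n0 \<le> q*N" using q1 N by (metis dual_order.trans mult_1 mult_le_mono1)
  have n_pos: "real n > 0" using n N1 by simp
  have c_nonneg: "0 \<le> c" using b_nonneg[of N] N1 tail_nonneg[of N] by (simp add: c_def)
  have "b n \<le> b (q*N) + b r + (f (q*N) + f r)"
    using subadd[OF qN r(1)] n_split by simp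
  also have "b (q*N) \<le> real n * c"
    using multiple_bound[OF N q1] mult_right_mono[OF _ c_nonneg, of "real (q*N)" "real n"]
      n_split unfolding c_def by simp
  also have "b r \<le> (\<Sum>r\<in>{n0..<n0+N}. b r)"
    using r b_nonneg n0_pos by (intro member_le_sum) auto
  also have "f (q*N) + f r \<le> 2 * f n"
    using f_mono[of "q*N" n] f_mono[of r n] n_split qN r(1) n0_pos by linarith
  finally have "b n / real n \<le> (real n * c + (\<Sum>r\<in>{n0..<n0+N}. b r) + 2 * f n) / real n"
    using n_pos by (intro divide_right_mono) auto
  also have "\<dots> = c + (\<Sum>r\<in>{n0..<n0+N}. b r) / real n + 2 * f n / real n"
    using n_pos by (simp add: field_simps)
  also have "\<dots> \<le> c + (\<Sum>r\<in>{n0..<n0+N}. b r) / real n + tail n"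
    using error_le_tail[of n] n_pos by simp
  finally show ?thesis unfolding c_def .
qed

theorem limit_exists: "\<exists>L. L \<ge> 0 \<and> (\<lambda>n. b n / real n) \<longlonglongrightarrow> L"
proof -
  define c where "c N = b N / real N + tail N" for N
  have c_nonneg: "c N \<ge> 0" if "n0 \<le> N" for N
    using b_nonneg[of N] tail_nonneg[of N] that n0_pos unfolding c_def by simp
  have "(\<lambda>n. b n / real n) \<longlonglongrightarrow> Inf (c ` {n0..})"
  proof (rule tendsto_Inf_of_approximate_bounds[OF _ tail_tendsto_0])
    show "bdd_below (c ` {n0..})" using c_nonneg by (auto intro!: bdd_belowI[of _ 0])
    show "c n - tail n \<le> b n / real n" for n by (simp add: c_def)
    show "b n / real n \<le> c N + (\<Sum>r\<in>{n0..<n0+N}. b r) / real n + tail n"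
      if "n0 \<le> N" "n0 + N \<le> n" for N n
      using upper_bound[OF that] unfolding c_def .
  qed
  moreover have "Inf (c ` {n0..}) \<ge> 0" using c_nonneg by (intro cInf_greatest) auto
  ultimately show ?thesis by blast
qed

end

theorem propositionA:
  fixes b :: "nat \<Rightarrow> real" and f :: "nat \<Rightarrow> real" and n0 :: nat
  assumes b_nonneg: "\<And>n. n \<ge> 1 \<Longrightarrow> b n \<ge> 0"
    and f_nonneg: "\<And>n. n \<ge> 1 \<Longrightarrow> f n \<ge> 0"
    and f_mono: "\<And>m n. 1 \<le> m \<Longrightarrow> m \<le> n \<Longrightarrow> f m \<le> f n"
    and f_sum: "summable (\<lambda>\<alpha>::nat. f (2 ^ (\<alpha> + 1)) / 2 ^ (\<alpha> + 1))"
    and n0_pos: "n0 > 0"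
    and subadd: "\<And>m n. n \<ge> n0 \<Longrightarrow> m \<ge> n0 \<Longrightarrow> b (n + m) \<le> b n + b m + f n + f m"
  shows "\<exists>L. L \<ge> 0 \<and> (\<lambda>n. b n / real n) \<longlonglongrightarrow> L"
proof -
  interpret almost_subadditive f b n0
    by unfold_locales (use assms in auto)
  show ?thesis by (rule limit_exists)
qed

end
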